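(* Let $X$ be a countably infinite set and $W=\{0,1\}^X$. The Sum Preorder $\succeq_{SP}$ is the largest relation in the set of preorders on $W$ satisfying Strong Pareto and Permutation Invariance. That is, $\succeq_{SP}$ is a preorder on $W$ satisfying both axioms, and for every preorder $\succeq$ on $W$ satisfying both axioms and all $w,v\in W$, $w\succeq v$ implies $w\succeq_{SP} v$.
   Context: Worlds are functions $w:X\to\mathbb R$. For a preorder $\succeq$, $w\succ v$ means $w\succeq v$ and not $v\succeq w$. For a permutation $\pi$ of $X$, $\pi(w)(x)=w(\pi(x))$. Strong Pareto: for all $w,v\in W$, if $w(x)\ge v(x)$ for all $x$ and $w(x)>v(x)$ for some $x$, then $w\succ v$. Permutation Invariance: for all $w,v\in W$ and every permutation $\pi$ of $X$, $w\succeq v$ iff $\pi(w)\succeq\pi(v)$. A series $\sum_{x\in X}a_x$ converges unconditionally (diverges unconditionally to $+\infty$) if it converges to the same value (diverges to $+\infty$) under every enumeration of $X$. Sum Preorder: $w\succeq_{SP} v$ iff $\sum_{x\in X}(w(x)-v(x))$ converges unconditionally to some $r\ge 0$ or diverges unconditionally to $+\infty$. A relation $\succeq$ weakly extends $\succeq'$ if $w\succeq' v$ implies $w\succeq v$; a relation is the largest in a set $\mathcal R$ of relations if it belongs to $\mathcal R$ and weakly extends every member of $\mathcal R$. *)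

theory Defs
  imports "HOL-Analysis.Analysis"
begin

definition W01 :: "('x \<Rightarrow> real) set" where
  "W01 = {w. \<forall>x. w x \<in> {0, 1}}"

definition preorder_on_worlds :: "('x \<Rightarrow> real) set \<Rightarrow> (('x \<Rightarrow> real) \<times> ('x \<Rightarrow> real)) set \<Rightarrow> bool" where
  "preorder_on_worlds W R \<longleftrightarrow> R \<subseteq> W \<times> W \<and> (\<forall>w\<in>W. (w, w) \<in> R) \<and>
     (\<forall>u v w. (u, v) \<in> R \<longrightarrow> (v, w) \<in> R \<longrightarrow> (u, w) \<in> R)"

definition strictly :: "('a \<times> 'a) set \<Rightarrow> 'a \<Rightarrow> 'a \<Rightarrow> bool" where
  "strictly R w v \<longleftrightarrow> (w, v) \<in> R \<and> (v, w) \<notin> R"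

definition strong_pareto :: "('x \<Rightarrow> real) set \<Rightarrow> (('x \<Rightarrow> real) \<times> ('x \<Rightarrow> real)) set \<Rightarrow> bool" where
  "strong_pareto W R \<longleftrightarrow> (\<forall>w\<in>W. \<forall>v\<in>W.
     (\<forall>x. w x \<ge> v x) \<and> (\<exists>x. w x > v x) \<longrightarrow> strictly R w v)"

text \<open>\<open>\<pi>(w)(x) = w(\<pi>(x))\<close>, i.e. \<open>\<pi>(w) = w \<circ> \<pi>\<close>.\<close>
definition permutation_invariant :: "('x \<Rightarrow> real) set \<Rightarrow> (('x \<Rightarrow> real) \<times> ('x \<Rightarrow> real)) set \<Rightarrow> bool" where
  "permutation_invariant W R \<longleftrightarrow> (\<forall>w\<in>W. \<forall>v\<in>W. \<forall>\<pi>::'x \<Rightarrow> 'x. bij \<pi> \<longrightarrow>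
     ((w, v) \<in> R \<longleftrightarrow> (w \<circ> \<pi>, v \<circ> \<pi>) \<in> R))"

definition converges_unconditionally :: "('x \<Rightarrow> real) \<Rightarrow> real \<Rightarrow> bool" where
  "converges_unconditionally a r \<longleftrightarrow> (\<forall>e::nat \<Rightarrow> 'x. bij e \<longrightarrow> (\<lambda>n. a (e n)) sums r)"

definition diverges_unconditionally_top :: "('x \<Rightarrow> real) \<Rightarrow> bool" where
  "diverges_unconditionally_top a \<longleftrightarrow>
     (\<forall>e::nat \<Rightarrow> 'x. bij e \<longrightarrow> filterlim (\<lambda>n. \<Sum>i<n. a (e i)) at_top sequentially)"

definition sum_preorder :: "('x \<Rightarrow> real) set \<Rightarrow> (('x \<Rightarrow> real) \<times> ('x \<Rightarrow> real)) set" where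
  "sum_preorder W = {(w, v). w \<in> W \<and> v \<in> W \<and>
     ((\<exists>r\<ge>0. converges_unconditionally (\<lambda>x. w x - v x) r) \<or>
      diverges_unconditionally_top (\<lambda>x. w x - v x))}"

end

theory Submission
  imports Defs
begin

text \<open>For \<open>0/1\<close>-valued worlds the series \<open>\<Sum>\<^sub>x (w x - v x)\<close> has terms in \<open>{-1, 0, 1}\<close>, so it
converges unconditionally exactly when the sets \<open>gains w v\<close> and \<open>gains v w\<close> where one world beats
the other are finite, and then its value is the difference of their cardinalities; it diverges
unconditionally to \<open>+\<infinity>\<close> exactly when \<open>gains w v\<close> is infinite and \<open>gains v w\<close> finite (if both are
infinite, swapping them is a permutation that negates the series). Hence \<open>w \<succeq>\<^sub>S\<^sub>P v\<close> means that
\<open>gains v w\<close> is finite and not larger than \<open>gains w v\<close>, from which the axioms follow directly.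

For maximality, suppose \<open>w \<succeq> v\<close> but not \<open>w \<succeq>\<^sub>S\<^sub>P v\<close>. Then \<open>gains w v\<close> injects into \<open>gains v w\<close> minus
one point \<open>b\<close>; the involution \<open>\<sigma>\<close> exchanging \<open>gains w v\<close> with its image makes \<open>u = w \<circ> \<sigma>\<close> Pareto
dominated by \<open>v\<close> (strictly at \<open>b\<close>). So \<open>v \<succ> u\<close>, while \<open>u \<succeq> w\<close> by invariance under \<open>\<sigma>\<close> applied to
\<open>w \<succeq> u\<close>, whence \<open>u \<succeq> w \<succeq> v\<close>, a contradiction.\<close>

definition gains :: "('x \<Rightarrow> real) \<Rightarrow> ('x \<Rightarrow> real) \<Rightarrow> 'x set" where
  "gains w v = {x. w x = 1 \<and> v x = 0}"

definition gains_dominate :: "('x \<Rightarrow> real) \<Rightarrow> ('x \<Rightarrow> real) \<Rightarrow> bool" where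
  "gains_dominate w v \<longleftrightarrow>
     finite (gains v w) \<and> (infinite (gains w v) \<or> card (gains v w) \<le> card (gains w v))"

subsection \<open>Permutations and series\<close>

lemma obtain_swap_permutation:
  assumes f: "bij_betw f A B" and disj: "A \<inter> B = {}"
  obtains \<sigma> where "\<And>x. \<sigma> (\<sigma> x) = x" "\<And>x. x \<in> A \<Longrightarrow> \<sigma> x \<in> B" "\<And>x. x \<in> B \<Longrightarrow> \<sigma> x \<in> A"
    "\<And>x. x \<notin> A \<Longrightarrow> x \<notin> B \<Longrightarrow> \<sigma> x = x"
proof
  define \<sigma> where "\<sigma> x = (if x \<in> A then f x else if x \<in> B then inv_into A f x else x)" for x
  have inj: "inj_on f A" and img: "f ` A = B"
    using f by (auto simp: bij_betw_def)
  show "\<sigma> x \<in> B" if "x \<in> A" for x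
    using that img by (auto simp: \<sigma>_def)
  show "\<sigma> x \<in> A" if "x \<in> B" for x
    using that disj img by (auto simp: \<sigma>_def inv_into_into)
  show "\<sigma> x = x" if "x \<notin> A" "x \<notin> B" for x
    using that by (simp add: \<sigma>_def)
  show "\<sigma> (\<sigma> x) = x" for x
  proof -
    consider "x \<in> A" | "x \<in> B" | "x \<notin> A" "x \<notin> B" by blast
    then show ?thesis
    proof cases
      case 1
      then have "f x \<in> B" "f x \<notin> A" using img disj by auto
      then show ?thesis using 1 inj by (simp add: \<sigma>_def)
    next
      case 2
      then have "inv_into A f x \<in> A" "x \<notin> A" using img disj by (auto intro: inv_into_into)
      then show ?thesis using 2 img by (simp add: \<sigma>_def f_inv_into_f)
    qed (simp add: \<sigma>_def)
  qed
qed

lemma all_bij_comp_iff: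
  fixes \<pi> :: "'a \<Rightarrow> 'a" and P :: "('b \<Rightarrow> 'a) \<Rightarrow> bool"
  assumes "bij \<pi>"
  shows "(\<forall>e. bij e \<longrightarrow> P (\<pi> \<circ> e)) \<longleftrightarrow> (\<forall>e. bij e \<longrightarrow> P e)"
proof
  assume P: "\<forall>e. bij e \<longrightarrow> P (\<pi> \<circ> e)"
  show "\<forall>e. bij e \<longrightarrow> P e"
  proof (intro allI impI)
    fix e :: "'b \<Rightarrow> 'a"
    assume "bij e"
    then have "P (\<pi> \<circ> (inv \<pi> \<circ> e))"
      using P assms by (simp add: bij_comp bij_imp_bij_inv)
    moreover have "\<pi> \<circ> inv \<pi> = id"
      using assms by (metis bij_is_surj surj_iff)
    ultimately show "P e"
      by (simp add: o_assoc)
  qed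
qed (use assms bij_comp in blast)

lemma converges_unconditionally_comp_bij:
  fixes \<pi> :: "'x \<Rightarrow> 'x"
  assumes "bij \<pi>"
  shows "converges_unconditionally (a \<circ> \<pi>) r \<longleftrightarrow> converges_unconditionally a r"
  using all_bij_comp_iff[OF assms, of "\<lambda>e. (a \<circ> e) sums r"]
  by (simp add: converges_unconditionally_def comp_def)

lemma diverges_unconditionally_top_comp_bij:
  fixes \<pi> :: "'x \<Rightarrow> 'x"
  assumes "bij \<pi>"
  shows "diverges_unconditionally_top (a \<circ> \<pi>) \<longleftrightarrow> diverges_unconditionally_top a"
  using all_bij_comp_iff[OF assms, of "\<lambda>e. filterlim (\<lambda>n. \<Sum>i<n. a (e i)) at_top sequentially"]
  by (simp add: diverges_unconditionally_top_def)

lemma not_diverges_unconditionally_top_if_antisymmetric: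
  fixes a :: "'x \<Rightarrow> real"
  assumes e: "bij (e :: nat \<Rightarrow> 'x)" and \<sigma>: "bij \<sigma>" and anti: "\<And>x. a (\<sigma> x) = - a x"
  shows "\<not> diverges_unconditionally_top a"
proof
  assume "diverges_unconditionally_top a"
  then have "filterlim (\<lambda>n. \<Sum>i<n. a (e i)) at_top sequentially"
    and "filterlim (\<lambda>n. \<Sum>i<n. a (\<sigma> (e i))) at_top sequentially"
    using e \<sigma> bij_comp[OF e \<sigma>] unfolding diverges_unconditionally_top_def comp_def by blast+
  then have "eventually (\<lambda>n. 1 \<le> (\<Sum>i<n. a (e i)) \<and> 1 \<le> (\<Sum>i<n. a (\<sigma> (e i)))) sequentially"
    unfolding filterlim_at_top by (intro eventually_conj) blast+
  then obtain n where "1 \<le> (\<Sum>i<n. a (e i))" "1 \<le> (\<Sum>i<n. - a (e i))"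
    unfolding anti by (auto simp: eventually_sequentially)
  then show False
    by (simp add: sum_negf)
qed

lemma finite_nonzero_if_summable_ge_1:
  fixes f :: "nat \<Rightarrow> real"
  assumes "summable f" and "\<And>n. f n \<noteq> 0 \<Longrightarrow> 1 \<le> \<bar>f n\<bar>"
  shows "finite {n. f n \<noteq> 0}"
proof -
  have "eventually (\<lambda>n. \<bar>f n\<bar> < 1) sequentially"
    using order_tendstoD(2)[OF tendsto_rabs[OF summable_LIMSEQ_zero[OF assms(1)]]] by simp
  then have "eventually (\<lambda>n. f n = 0) cofinite"
    unfolding cofinite_eq_sequentially by (rule eventually_mono) (use assms(2) in force)
  then show ?thesis
    by (simp add: eventually_cofinite)
qed

lemma card_lessThan_Int_vimage_le:
  fixes e :: "nat \<Rightarrow> 'x"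
  assumes "inj e" "finite A"
  shows "card ({..<n} \<inter> e -` A) \<le> card A"
  by (rule card_inj_on_le[OF _ _ assms(2)]) (use assms(1) in \<open>auto simp: inj_on_def\<close>)

lemma filterlim_card_lessThan_Int_at_top:
  assumes "infinite (N :: nat set)"
  shows "filterlim (\<lambda>n. real (card ({..<n} \<inter> N))) at_top sequentially"
  unfolding filterlim_at_top
proof
  fix Z :: real
  obtain F where F: "finite F" "card F = nat \<lceil>Z\<rceil>" "F \<subseteq> N"
    using infinite_arbitrarily_large[OF assms] by blast
  obtain m where "F \<subseteq> {..<m}"
    using finite_nat_bounded[OF F(1)] by blast
  then have "F \<subseteq> {..<n} \<inter> N" if "m \<le> n" for n
    using that F(3) by auto
  then have "eventually (\<lambda>n. card F \<le> card ({..<n} \<inter> N)) sequentially"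
    unfolding eventually_sequentially by (blast intro: card_mono)
  then show "eventually (\<lambda>n. Z \<le> real (card ({..<n} \<inter> N))) sequentially"
    by (rule eventually_mono) (use F(2) in linarith)
qed

subsection \<open>Sums of differences of \<open>0/1\<close>-valued worlds\<close>

lemma W01_cases: "w \<in> W01 \<Longrightarrow> w x = 0 \<or> w x = 1"
  by (auto simp: W01_def)

lemma W01_comp: "w \<in> W01 \<Longrightarrow> w \<circ> \<pi> \<in> W01"
  by (auto simp: W01_def)

lemma gains_disjoint: "gains w v \<inter> gains v w = {}"
  by (auto simp: gains_def)

lemma gains_subset_Un: "v \<in> W01 \<Longrightarrow> gains w u \<subseteq> gains w v \<union> gains v u"
  by (auto simp: gains_def dest: W01_cases)

lemma W01_diff_eq:
  assumes "w \<in> W01" "v \<in> W01"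
  shows "w x - v x = of_bool (x \<in> gains w v) - of_bool (x \<in> gains v w)"
  using W01_cases[OF assms(1), of x] W01_cases[OF assms(2), of x] by (auto simp: gains_def)

lemma W01_sum_diff:
  assumes "w \<in> W01" "v \<in> W01" "finite S" "gains w v \<subseteq> S" "gains v w \<subseteq> S"
  shows "(\<Sum>x\<in>S. w x - v x) = real (card (gains w v)) - real (card (gains v w))"
proof -
  have "S \<inter> {x. x \<in> gains w v} = gains w v" "S \<inter> {x. x \<in> gains v w} = gains v w"
    using assms(4,5) by auto
  then show ?thesis
    using assms(3) by (simp add: W01_diff_eq[OF assms(1,2)] sum_subtractf)
qed

lemma W01_partial_sum:
  fixes e :: "nat \<Rightarrow> 'x"
  assumes "w \<in> W01" "v \<in> W01"
  shows "(\<Sum>i<n. w (e i) - v (e i)) =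
    real (card ({..<n} \<inter> e -` gains w v)) - real (card ({..<n} \<inter> e -` gains v w))"
  by (simp add: W01_diff_eq[OF assms] sum_subtractf vimage_def)

lemma W01_sums_if_finite_gains:
  fixes e :: "nat \<Rightarrow> 'x"
  assumes "w \<in> W01" "v \<in> W01" "finite (gains w v)" "finite (gains v w)" "bij e"
  shows "(\<lambda>n. w (e n) - v (e n)) sums (real (card (gains w v)) - real (card (gains v w)))"
proof -
  define S where "S = gains w v \<union> gains v w"
  have "finite S"
    using assms(3,4) by (simp add: S_def)
  have "(\<lambda>n. w (e n) - v (e n)) sums (\<Sum>n\<in>e -` S. w (e n) - v (e n))"
    using \<open>finite S\<close> assms(5)
    by (intro sums_finite) (auto simp: S_def W01_diff_eq[OF assms(1,2)] bij_def finite_vimageI)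
  also have "(\<Sum>n\<in>e -` S. w (e n) - v (e n)) = (\<Sum>x\<in>S. w x - v x)"
    using assms(5)
    by (intro sum.reindex_bij_betw) (auto simp: bij_betw_def bij_def image_vimage_eq intro: inj_on_subset)
  also have "\<dots> = real (card (gains w v)) - real (card (gains v w))"
    using \<open>finite S\<close> by (intro W01_sum_diff[OF assms(1,2)]) (auto simp: S_def)
  finally show ?thesis .
qed

lemma finite_gains_if_summable:
  fixes e :: "nat \<Rightarrow> 'x"
  assumes wv: "w \<in> W01" "v \<in> W01" and e: "bij e" and "summable (\<lambda>n. w (e n) - v (e n))"
  shows "finite (gains w v)" "finite (gains v w)"
proof -
  have "finite {n. w (e n) - v (e n) \<noteq> 0}"
    by (rule finite_nonzero_if_summable_ge_1[OF assms(4)]) (auto simp: W01_diff_eq[OF wv])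
  moreover have "gains w v \<union> gains v w \<subseteq> e ` {n. w (e n) - v (e n) \<noteq> 0}"
  proof
    fix x
    assume "x \<in> gains w v \<union> gains v w"
    moreover obtain n where "x = e n"
      using e by (metis bij_pointE)
    ultimately show "x \<in> e ` {n. w (e n) - v (e n) \<noteq> 0}"
      by (auto simp: gains_def)
  qed
  ultimately show "finite (gains w v)" "finite (gains v w)"
    by (meson finite_Un finite_imageI finite_subset)+
qed

lemma diverges_unconditionally_top_W01I:
  fixes w v :: "'x \<Rightarrow> real"
  assumes wv: "w \<in> W01" "v \<in> W01" and gains: "infinite (gains w v)" "finite (gains v w)"
  shows "diverges_unconditionally_top (\<lambda>x. w x - v x)"
  unfolding diverges_unconditionally_top_def filterlim_at_top
proof (intro allI impI)
  fix e :: "nat \<Rightarrow> 'x" and Z :: real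
  assume e: "bij e"
  then have "e ` (e -` gains w v) = gains w v"
    by (simp add: bij_is_surj image_vimage_eq)
  then have "infinite (e -` gains w v)"
    using gains(1) finite_imageI[of "e -` gains w v" e] by argo
  then have "eventually (\<lambda>n. Z + card (gains v w) \<le> card ({..<n} \<inter> e -` gains w v)) sequentially"
    using filterlim_card_lessThan_Int_at_top unfolding filterlim_at_top by blast
  then show "eventually (\<lambda>n. Z \<le> (\<Sum>i<n. w (e i) - v (e i))) sequentially"
  proof (rule eventually_mono)
    fix n
    assume "Z + card (gains v w) \<le> card ({..<n} \<inter> e -` gains w v)"
    moreover have "card ({..<n} \<inter> e -` gains v w) \<le> card (gains v w)"
      using card_lessThan_Int_vimage_le[of e "gains v w"] gains(2) e by (simp add: bij_def)
    ultimately show "Z \<le> (\<Sum>i<n. w (e i) - v (e i))"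
      unfolding W01_partial_sum[OF wv] by linarith
  qed
qed

lemma infinite_gains_if_diverges_unconditionally_top:
  fixes e :: "nat \<Rightarrow> 'x" and w v :: "'x \<Rightarrow> real"
  assumes wv: "w \<in> W01" "v \<in> W01" and e: "bij e"
    and div: "diverges_unconditionally_top (\<lambda>x. w x - v x)"
  shows "infinite (gains w v)"
proof
  assume fin: "finite (gains w v)"
  have bounded: "(\<Sum>i<n. w (e i) - v (e i)) \<le> card (gains w v)" for n
    using card_lessThan_Int_vimage_le[of e "gains w v" n] fin e
    by (simp add: W01_partial_sum[OF wv] bij_def)
  have "eventually (\<lambda>n. real (card (gains w v)) + 1 \<le> (\<Sum>i<n. w (e i) - v (e i))) sequentially"
    using div e unfolding diverges_unconditionally_top_def filterlim_at_top by blast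
  then obtain n where "real (card (gains w v)) + 1 \<le> (\<Sum>i<n. w (e i) - v (e i))"
    by (auto simp: eventually_sequentially)
  then show False
    using bounded[of n] by linarith
qed

subsection \<open>The sum preorder on \<open>0/1\<close>-valued worlds\<close>

context
  assumes countable_UNIV: "countable (UNIV :: 'x set)" and infinite_UNIV: "infinite (UNIV :: 'x set)"
begin

lemma obtain_enumeration: obtains e :: "nat \<Rightarrow> 'x" where "bij e"
  using bij_betw_from_nat_into[OF countable_UNIV infinite_UNIV] by blast

lemma converges_unconditionally_W01_iff:
  assumes wv: "w \<in> W01" "v \<in> W01"
  shows "(\<exists>r\<ge>0. converges_unconditionally (\<lambda>x::'x. w x - v x) r) \<longleftrightarrow>
    finite (gains w v) \<and> finite (gains v w) \<and> card (gains v w) \<le> card (gains w v)"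
proof
  assume "finite (gains w v) \<and> finite (gains v w) \<and> card (gains v w) \<le> card (gains w v)"
  then show "\<exists>r\<ge>0. converges_unconditionally (\<lambda>x::'x. w x - v x) r"
    by (auto simp: converges_unconditionally_def
        intro!: exI[of _ "real (card (gains w v)) - real (card (gains v w))"]
          W01_sums_if_finite_gains[OF wv])
next
  assume "\<exists>r\<ge>0. converges_unconditionally (\<lambda>x::'x. w x - v x) r"
  then obtain r where r: "r \<ge> 0" "converges_unconditionally (\<lambda>x::'x. w x - v x) r"
    by blast
  obtain e :: "nat \<Rightarrow> 'x" where e: "bij e"
    using obtain_enumeration .
  have sums: "(\<lambda>n. w (e n) - v (e n)) sums r"
    using r(2) e by (simp add: converges_unconditionally_def)
  note fin = finite_gains_if_summable[OF wv e sums_summable[OF sums]]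
  then show "finite (gains w v) \<and> finite (gains v w) \<and> card (gains v w) \<le> card (gains w v)"
    using sums_unique2[OF sums W01_sums_if_finite_gains[OF wv fin e]] r(1) by simp
qed

lemma finite_gains_if_diverges_unconditionally_top:
  assumes wv: "w \<in> W01" "v \<in> W01" and div: "diverges_unconditionally_top (\<lambda>x::'x. w x - v x)"
  shows "finite (gains v w)"
proof (rule ccontr)
  assume "infinite (gains v w)"
  obtain e :: "nat \<Rightarrow> 'x" where e: "bij e"
    using obtain_enumeration .
  have "countable (gains w v)" "countable (gains v w)"
    using countable_subset[OF subset_UNIV countable_UNIV] by blast+
  with \<open>infinite (gains v w)\<close> infinite_gains_if_diverges_unconditionally_top[OF wv e div]
  have "bij_betw (from_nat_into (gains v w) \<circ> to_nat_on (gains w v)) (gains w v) (gains v w)"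
    by (intro bij_betw_trans[OF to_nat_on_infinite bij_betw_from_nat_into])
  then obtain \<sigma> where \<sigma>: "\<And>x. \<sigma> (\<sigma> x) = x" "\<And>x. x \<in> gains w v \<Longrightarrow> \<sigma> x \<in> gains v w"
    "\<And>x. x \<in> gains v w \<Longrightarrow> \<sigma> x \<in> gains w v" "\<And>x. x \<notin> gains w v \<Longrightarrow> x \<notin> gains v w \<Longrightarrow> \<sigma> x = x"
    by (rule obtain_swap_permutation[OF _ gains_disjoint]) blast
  have "w (\<sigma> x) - v (\<sigma> x) = - (w x - v x)" for x
    using \<sigma>(2-4)[of x] gains_disjoint[of w v] unfolding W01_diff_eq[OF wv]
    by (cases "x \<in> gains w v"; cases "x \<in> gains v w") auto
  then show False
    using not_diverges_unconditionally_top_if_antisymmetric[OF e involuntory_imp_bij[OF \<sigma>(1)],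
        where a = "\<lambda>x. w x - v x"] div
    by simp
qed

lemma sum_preorder_W01_iff:
  "((w :: 'x \<Rightarrow> real), v) \<in> sum_preorder W01 \<longleftrightarrow> w \<in> W01 \<and> v \<in> W01 \<and> gains_dominate w v"
proof -
  have "diverges_unconditionally_top (\<lambda>x::'x. w x - v x) \<longleftrightarrow> infinite (gains w v) \<and> finite (gains v w)"
    if "w \<in> W01" "v \<in> W01"
    using that obtain_enumeration infinite_gains_if_diverges_unconditionally_top
      finite_gains_if_diverges_unconditionally_top diverges_unconditionally_top_W01I by metis
  then show ?thesis
    using converges_unconditionally_W01_iff[of w v]
    by (auto simp: sum_preorder_def gains_dominate_def)
qed

end

lemma gains_dominate_refl: "gains_dominate w w"
  using gains_disjoint[of w w] by (simp add: gains_dominate_def)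

lemma gains_dominate_trans:
  assumes W01: "w \<in> W01" "v \<in> W01" "u \<in> W01"
    and wv: "gains_dominate w v" and vu: "gains_dominate v u"
  shows "gains_dominate w u"
proof -
  have fin_uv: "finite (gains u v)" and fin_vw: "finite (gains v w)"
    using wv vu by (auto simp: gains_dominate_def)
  then have fin_uw: "finite (gains u w)"
    using gains_subset_Un[OF W01(2), of u w] by (meson finite_Un finite_subset)
  show ?thesis
  proof (cases "finite (gains w v) \<and> finite (gains v u)")
    case True
    define S where "S = gains w v \<union> gains v w \<union> gains v u \<union> gains u v"
    have "finite S"
      using True fin_uv fin_vw by (simp add: S_def)
    have S: "gains w v \<subseteq> S" "gains v w \<subseteq> S" "gains v u \<subseteq> S" "gains u v \<subseteq> S"
      by (auto simp: S_def)
    have "gains w u \<subseteq> S" "gains u w \<subseteq> S"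
      using gains_subset_Un[OF W01(2), of w u] gains_subset_Un[OF W01(2), of u w] by (auto simp: S_def)
    then have "real (card (gains w u)) - card (gains u w) = (\<Sum>x\<in>S. w x - u x)"
      using \<open>finite S\<close> by (simp add: W01_sum_diff[OF W01(1,3)])
    also have "\<dots> = (\<Sum>x\<in>S. w x - v x) + (\<Sum>x\<in>S. v x - u x)"
      by (simp add: sum.distrib[symmetric])
    also have "\<dots> = (real (card (gains w v)) - card (gains v w)) + (real (card (gains v u)) - card (gains u v))"
      using W01_sum_diff[OF W01(1,2) \<open>finite S\<close> S(1,2)] W01_sum_diff[OF W01(2,3) \<open>finite S\<close> S(3,4)]
      by simp
    finally have "real (card (gains w u)) - card (gains u w) =
        (real (card (gains w v)) - card (gains v w)) + (real (card (gains v u)) - card (gains u v))" .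
    moreover have "card (gains v w) \<le> card (gains w v)" "card (gains u v) \<le> card (gains v u)"
      using wv vu True by (auto simp: gains_dominate_def)
    ultimately show ?thesis
      using fin_uw by (simp add: gains_dominate_def)
  next
    case False
    have "gains w v \<subseteq> gains w u \<union> gains u v" "gains v u \<subseteq> gains v w \<union> gains w u"
      using gains_subset_Un[OF W01(3)] gains_subset_Un[OF W01(1)] by blast+
    then have "infinite (gains w u)"
      using False fin_uv fin_vw by (meson finite_Un finite_subset)
    then show ?thesis
      using fin_uw by (simp add: gains_dominate_def)
  qed
qed

lemma gains_dominate_if_pareto:
  assumes "w \<in> W01" "v \<in> W01" "\<And>x. v x \<le> w x" "v x < w x"
  shows "gains_dominate w v" and "\<not> gains_dominate v w"
proof -
  have "y \<notin> gains v w" for y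
    using assms(3)[of y] by (auto simp: gains_def)
  then have "gains v w = {}"
    by blast
  moreover have "x \<in> gains w v"
    using assms(4) W01_cases[OF assms(1), of x] W01_cases[OF assms(2), of x] by (auto simp: gains_def)
  ultimately show "gains_dominate w v" "\<not> gains_dominate v w"
    by (auto simp: gains_dominate_def card_gt_0_iff)
qed

lemma permutation_invariant_sum_preorder:
  fixes W :: "('x \<Rightarrow> real) set"
  assumes "\<And>w \<pi>. w \<in> W \<Longrightarrow> bij \<pi> \<Longrightarrow> w \<circ> \<pi> \<in> W"
  shows "permutation_invariant W (sum_preorder W)"
  unfolding permutation_invariant_def
proof (intro ballI allI impI)
  fix w v :: "'x \<Rightarrow> real" and \<pi> :: "'x \<Rightarrow> 'x"
  assume "w \<in> W" "v \<in> W" "bij \<pi>"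
  moreover have "(\<lambda>x. (w \<circ> \<pi>) x - (v \<circ> \<pi>) x) = (\<lambda>x. w x - v x) \<circ> \<pi>"
    by (simp add: comp_def)
  ultimately show "(w, v) \<in> sum_preorder W \<longleftrightarrow> (w \<circ> \<pi>, v \<circ> \<pi>) \<in> sum_preorder W"
    using assms by (simp add: sum_preorder_def converges_unconditionally_comp_bij
        diverges_unconditionally_top_comp_bij)
qed

lemma lepoll_gains_if_not_gains_dominate:
  assumes "countable (UNIV :: 'x set)" and "\<not> gains_dominate (w :: 'x \<Rightarrow> real) v"
  obtains b where "b \<in> gains v w" "gains w v \<lesssim> gains v w - {b}"
proof (cases "finite (gains v w)")
  case True
  then have fin: "finite (gains w v)" and less: "card (gains w v) < card (gains v w)"
    using assms(2) by (auto simp: gains_dominate_def)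
  then obtain b where "b \<in> gains v w"
    by fastforce
  moreover have "gains w v \<lesssim> gains v w - {b}"
    using True fin less \<open>b \<in> gains v w\<close> by (simp add: lepoll_iff_card_le)
  ultimately show ?thesis ..
next
  case False
  then obtain b where "b \<in> gains v w"
    by fastforce
  have "gains w v \<lesssim> (UNIV :: nat set)"
    using countable_subset[OF subset_UNIV assms(1)] by (auto simp: countable_def lepoll_def)
  also have "(UNIV :: nat set) \<lesssim> gains v w - {b}"
    using False by (intro infinite_le_lepoll[THEN iffD1]) simp
  finally show ?thesis
    using \<open>b \<in> gains v w\<close> that by blast
qed

lemma obtain_involution_pareto_dominated:
  assumes "countable (UNIV :: 'x set)" and w: "w \<in> W01" and v: "v \<in> W01"
    and "\<not> gains_dominate (w :: 'x \<Rightarrow> real) v"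
  obtains \<sigma> b where "\<And>x. \<sigma> (\<sigma> x) = x" "\<And>x. w (\<sigma> x) \<le> v x" "w (\<sigma> b) < v b"
proof -
  obtain b where b: "b \<in> gains v w" and "gains w v \<lesssim> gains v w - {b}"
    using lepoll_gains_if_not_gains_dominate[OF assms(1,4)] .
  then obtain f where f: "inj_on f (gains w v)" "f ` gains w v \<subseteq> gains v w - {b}"
    unfolding lepoll_def by blast
  have "gains w v \<inter> f ` gains w v = {}"
    using f(2) gains_disjoint[of w v] by blast
  with inj_on_imp_bij_betw[OF f(1)]
  obtain \<sigma> where \<sigma>: "\<And>x. \<sigma> (\<sigma> x) = x" "\<And>x. x \<in> gains w v \<Longrightarrow> \<sigma> x \<in> f ` gains w v"
    "\<And>x. x \<in> f ` gains w v \<Longrightarrow> \<sigma> x \<in> gains w v"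
    "\<And>x. x \<notin> gains w v \<Longrightarrow> x \<notin> f ` gains w v \<Longrightarrow> \<sigma> x = x"
    by (rule obtain_swap_permutation) blast
  have "w (\<sigma> x) \<le> v x" for x
    using \<sigma>(2,4)[of x] f(2) W01_cases[OF w, of x] W01_cases[OF w, of "\<sigma> x"] W01_cases[OF v, of x]
    by (cases "x \<in> gains w v"; cases "x \<in> f ` gains w v") (auto simp: gains_def)
  moreover have "b \<notin> gains w v" "b \<notin> f ` gains w v"
    using b f(2) gains_disjoint[of w v] by blast+
  then have "w (\<sigma> b) < v b"
    using \<sigma>(4) b by (simp add: gains_def)
  ultimately show ?thesis
    using that \<sigma>(1) by blast
qed

lemma gains_dominate_if_preorder_pareto_invariant:
  assumes "countable (UNIV :: 'x set)"
    and preorder: "preorder_on_worlds (W01 :: ('x \<Rightarrow> real) set) R"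
    and pareto: "strong_pareto W01 R" and invariant: "permutation_invariant W01 R"
    and w: "w \<in> W01" and v: "v \<in> W01" and "(w, v) \<in> R"
  shows "gains_dominate w v"
proof (rule ccontr)
  assume "\<not> gains_dominate w v"
  then obtain \<sigma> b where \<sigma>: "\<And>x. \<sigma> (\<sigma> x) = x" and dominated: "\<And>x. w (\<sigma> x) \<le> v x" "w (\<sigma> b) < v b"
    by (rule obtain_involution_pareto_dominated[OF assms(1) w v]) blast
  define u where "u = w \<circ> \<sigma>"
  have "u \<in> W01"
    using W01_comp[OF w] by (simp add: u_def)
  moreover have "\<forall>x. u x \<le> v x" "\<exists>x. u x < v x"
    using dominated by (auto simp: u_def)
  ultimately have "strictly R v u"
    using pareto v unfolding strong_pareto_def by blast
  then have "(w, u) \<in> R" "(u, v) \<notin> R"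
    using preorder \<open>(w, v) \<in> R\<close> by (auto simp: strictly_def preorder_on_worlds_def)
  moreover have "(w \<circ> \<sigma>, u \<circ> \<sigma>) \<in> R"
    using invariant w \<open>u \<in> W01\<close> involuntory_imp_bij[OF \<sigma>] \<open>(w, u) \<in> R\<close>
    unfolding permutation_invariant_def by blast
  moreover have "u \<circ> \<sigma> = w"
    by (simp add: u_def comp_def \<sigma> fun_eq_iff)
  ultimately have "(u, w) \<in> R"
    by (simp add: u_def)
  then show False
    using preorder \<open>(w, v) \<in> R\<close> \<open>(u, v) \<notin> R\<close> by (auto simp: preorder_on_worlds_def)
qed

theorem proposition2:
  assumes "countable (UNIV :: 'x set)" and "infinite (UNIV :: 'x set)"
  shows "preorder_on_worlds (W01 :: ('x \<Rightarrow> real) set) (sum_preorder W01)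
    \<and> strong_pareto (W01 :: ('x \<Rightarrow> real) set) (sum_preorder W01)
    \<and> permutation_invariant (W01 :: ('x \<Rightarrow> real) set) (sum_preorder W01)
    \<and> (\<forall>R. preorder_on_worlds (W01 :: ('x \<Rightarrow> real) set) R \<and> strong_pareto W01 R
           \<and> permutation_invariant W01 R
           \<longrightarrow> (\<forall>w\<in>W01. \<forall>v\<in>W01. (w, v) \<in> R \<longrightarrow> (w, v) \<in> sum_preorder W01))"
proof (intro conjI allI impI ballI)
  note sum_preorder = sum_preorder_W01_iff[OF assms]
  have "sum_preorder W01 \<subseteq> W01 \<times> (W01 :: ('x \<Rightarrow> real) set)"
    by (auto simp: sum_preorder_def)
  then show "preorder_on_worlds (W01 :: ('x \<Rightarrow> real) set) (sum_preorder W01)"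
    unfolding preorder_on_worlds_def sum_preorder
    by (meson gains_dominate_refl gains_dominate_trans)
  show "strong_pareto (W01 :: ('x \<Rightarrow> real) set) (sum_preorder W01)"
    unfolding strong_pareto_def strictly_def sum_preorder
    by (metis gains_dominate_if_pareto)
  show "permutation_invariant (W01 :: ('x \<Rightarrow> real) set) (sum_preorder W01)"
    by (rule permutation_invariant_sum_preorder) (rule W01_comp)
  fix R and w v :: "'x \<Rightarrow> real"
  assume "preorder_on_worlds W01 R \<and> strong_pareto W01 R \<and> permutation_invariant W01 R"
    and "w \<in> W01" "v \<in> W01" "(w, v) \<in> R"
  then show "(w, v) \<in> sum_preorder W01"
    unfolding sum_preorder by (auto intro: gains_dominate_if_preorder_pareto_invariant[OF assms(1)])
qed

end
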